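(* Let $X,E,F,G$ be locally convex spaces over $\mathbb{K}$ such that $X$ is a $k^\infty$-space. Let $U\subseteq X$ be open, $n\in\mathbb{N}_0\cup\{\infty\}$, and let $\mathcal{S}=b$ or $\mathcal{S}=c$. If $f\colon U\to L(E,F)_{\mathcal{S}}$ and $g\colon U\to L(F,G)_{\mathcal{S}}$ are $C^n_{\mathbb{K}}$-maps, then the map $U\to L(E,G)_{\mathcal{S}}$, $z\mapsto g(z)\circ f(z)$, is $C^n_{\mathbb{K}}$.
   Context: $L(E,F)_b$ (resp. $L(E,F)_c$) is the space of continuous linear maps $E\to F$ with the topology of uniform convergence on bounded (resp. compact) subsets of $E$. $C^n_{\mathbb{K}}$-maps in Keller's sense: $f$ is $C^0$ if continuous; $C^1$ if continuous, all directional derivatives $df(x,y)=\lim_{t\to0}(f(x+ty)-f(x))/t$ exist and $df\colon U\times X\to F$ is continuous; $C^{n+1}$ if $C^1$ and $df$ is $C^n$; $C^\infty$ if $C^n$ for all $n$. A Hausdorff space $X$ is a $k$-space if a set is closed whenever its intersection with each compact set is closed in that compact set; $X$ is a $k^\infty$-space if it is Hausdorff and all finite powers $X^n$ are $k$-spaces (e.g. $X=\mathbb{K}=\mathbb{C}$, or any metrizable space). *)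

theory Defs
  imports "HOL-Analysis.Analysis" "HOL-Library.Function_Algebras" "HOL-Library.Extended_Nat"
begin

text \<open>Scalars: a type 'k of class real_normed_field (up to isometric isomorphism
  such a field is R or C).\<close>

definition seminorm :: "('k::real_normed_field \<Rightarrow> 'v::ab_group_add \<Rightarrow> 'v) \<Rightarrow> ('v \<Rightarrow> real) \<Rightarrow> bool" where
  "seminorm sc p \<longleftrightarrow> (\<forall>x. 0 \<le> p x) \<and> (\<forall>t x. p (sc t x) = norm t * p x)
      \<and> (\<forall>x y. p (x + y) \<le> p x + p y)"

definition seminorm_topology :: "'v::ab_group_add set \<Rightarrow> ('v \<Rightarrow> real) set \<Rightarrow> 'v topology" where
  "seminorm_topology V P = topology (\<lambda>U. U \<subseteq> V \<and> (\<forall>x\<in>U. \<exists>F e. finite F \<and> F \<subseteq> P \<and> e > 0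
       \<and> {y\<in>V. \<forall>p\<in>F. p (y - x) < e} \<subseteq> U))"

abbreviation lcs_top :: "('v::ab_group_add \<Rightarrow> real) set \<Rightarrow> 'v topology" where
  "lcs_top P \<equiv> seminorm_topology UNIV P"

definition lcs :: "('k::real_normed_field \<Rightarrow> 'v::ab_group_add \<Rightarrow> 'v) \<Rightarrow> ('v \<Rightarrow> real) set \<Rightarrow> bool" where
  "lcs sc P \<longleftrightarrow> vector_space sc \<and> (\<forall>p\<in>P. seminorm sc p) \<and> (\<forall>x. x \<noteq> 0 \<longrightarrow> (\<exists>p\<in>P. p x \<noteq> 0))"

definition bounded_sets :: "('v \<Rightarrow> real) set \<Rightarrow> 'v set set" where
  "bounded_sets P = {B. \<forall>p\<in>P. bdd_above (p ` B)}"

definition compact_sets :: "('v::ab_group_add \<Rightarrow> real) set \<Rightarrow> 'v set set" where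
  "compact_sets P = {K. compactin (lcs_top P) K}"

text \<open>b = True: bounded sets (topology of L(E,F)_b); b = False: compact sets (L(E,F)_c).\<close>
definition Sfam :: "bool \<Rightarrow> ('v::ab_group_add \<Rightarrow> real) set \<Rightarrow> 'v set set" where
  "Sfam b P = (if b then bounded_sets P else compact_sets P)"

definition Lspace :: "('k::real_normed_field \<Rightarrow> 'e::ab_group_add \<Rightarrow> 'e) \<Rightarrow> ('e \<Rightarrow> real) set
    \<Rightarrow> ('k \<Rightarrow> 'f::ab_group_add \<Rightarrow> 'f) \<Rightarrow> ('f \<Rightarrow> real) set \<Rightarrow> ('e \<Rightarrow> 'f) set" where
  "Lspace scE PE scF PF = {T. Vector_Spaces.linear scE scF T \<and> continuous_map (lcs_top PE) (lcs_top PF) T}"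

definition Lseminorms :: "bool \<Rightarrow> ('e::ab_group_add \<Rightarrow> real) set \<Rightarrow> ('f \<Rightarrow> real) set \<Rightarrow> (('e \<Rightarrow> 'f) \<Rightarrow> real) set" where
  "Lseminorms b PE PF = {(\<lambda>T. Sup (insert 0 ((\<lambda>x. q (T x)) ` B))) | B q. B \<in> Sfam b PE \<and> q \<in> PF}"

definition Ltop :: "bool \<Rightarrow> ('k::real_normed_field \<Rightarrow> 'e::ab_group_add \<Rightarrow> 'e) \<Rightarrow> ('e \<Rightarrow> real) set
    \<Rightarrow> ('k \<Rightarrow> 'f::ab_group_add \<Rightarrow> 'f) \<Rightarrow> ('f \<Rightarrow> real) set \<Rightarrow> ('e \<Rightarrow> 'f) topology" where
  "Ltop b scE PE scF PF = seminorm_topology (Lspace scE PE scF PF) (Lseminorms b PE PF)"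

definition Lscale :: "('k \<Rightarrow> 'f \<Rightarrow> 'f) \<Rightarrow> 'k \<Rightarrow> ('e \<Rightarrow> 'f) \<Rightarrow> ('e \<Rightarrow> 'f)" where
  "Lscale scF t T = (\<lambda>v. scF t (T v))"

definition kinf_space :: "'a topology \<Rightarrow> bool" where
  "kinf_space X \<longleftrightarrow> Hausdorff_space X \<and> (\<forall>n::nat. k_space (product_topology (\<lambda>_. X) {..<n}))"

text \<open>X^m is encoded as extensional functions on {..<m} (product topology). A pair (x,y) in
  X^m \<times> X^m is encoded as w in X^(2m) with x = first m coordinates, y = last m coordinates.
  Thus the map df : W \<times> X^m \<rightarrow> Y of Keller's definition becomes a map on a subset of X^(2m),
  and the recursive definition (C^(k+1) iff C^1 and df is C^k) can be stated uniformly.\<close>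

definition Xpow :: "('x::ab_group_add \<Rightarrow> real) set \<Rightarrow> nat \<Rightarrow> (nat \<Rightarrow> 'x) topology" where
  "Xpow PX m = product_topology (\<lambda>_. lcs_top PX) {..<m}"

definition dom2 :: "('x::ab_group_add \<Rightarrow> real) set \<Rightarrow> nat \<Rightarrow> (nat \<Rightarrow> 'x) set \<Rightarrow> (nat \<Rightarrow> 'x) set" where
  "dom2 PX m W = {w \<in> topspace (Xpow PX (2*m)). restrict w {..<m} \<in> W}"

definition shiftpt :: "('k \<Rightarrow> 'x::ab_group_add \<Rightarrow> 'x) \<Rightarrow> nat \<Rightarrow> (nat \<Rightarrow> 'x) \<Rightarrow> 'k \<Rightarrow> (nat \<Rightarrow> 'x)" where
  "shiftpt scX m w t = restrict (\<lambda>i. w i + scX t (w (m + i))) {..<m}"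

definition is_dirderiv :: "('k::real_normed_field \<Rightarrow> 'x::ab_group_add \<Rightarrow> 'x) \<Rightarrow> ('x \<Rightarrow> real) set
    \<Rightarrow> ('k \<Rightarrow> 'y::ab_group_add \<Rightarrow> 'y) \<Rightarrow> 'y topology \<Rightarrow> nat \<Rightarrow> (nat \<Rightarrow> 'x) set
    \<Rightarrow> ((nat \<Rightarrow> 'x) \<Rightarrow> 'y) \<Rightarrow> ((nat \<Rightarrow> 'x) \<Rightarrow> 'y) \<Rightarrow> bool" where
  "is_dirderiv scX PX scY TY m W phi psi \<longleftrightarrow>
     (\<forall>w \<in> dom2 PX m W. limitin TY
        (\<lambda>t. scY (inverse t) (phi (shiftpt scX m w t) - phi (restrict w {..<m}))) (psi w) (at 0))"

fun Ck :: "('k::real_normed_field \<Rightarrow> 'x::ab_group_add \<Rightarrow> 'x) \<Rightarrow> ('x \<Rightarrow> real) set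
    \<Rightarrow> ('k \<Rightarrow> 'y::ab_group_add \<Rightarrow> 'y) \<Rightarrow> 'y topology \<Rightarrow> nat \<Rightarrow> nat \<Rightarrow> (nat \<Rightarrow> 'x) set
    \<Rightarrow> ((nat \<Rightarrow> 'x) \<Rightarrow> 'y) \<Rightarrow> bool" where
  "Ck scX PX scY TY 0 m W phi = continuous_map (subtopology (Xpow PX m) W) TY phi"
| "Ck scX PX scY TY (Suc k) m W phi =
     (continuous_map (subtopology (Xpow PX m) W) TY phi \<and>
      (\<exists>psi. is_dirderiv scX PX scY TY m W phi psi \<and> Ck scX PX scY TY k (2*m) (dom2 PX m W) psi))"

text \<open>f : U \<rightarrow> Y is C^n (n \<in> N_0 \<union> {\<infinity>}); U \<subseteq> X is identified with a subset of X^1.\<close>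
definition Cn_map :: "('k::real_normed_field \<Rightarrow> 'x::ab_group_add \<Rightarrow> 'x) \<Rightarrow> ('x \<Rightarrow> real) set
    \<Rightarrow> ('k \<Rightarrow> 'y::ab_group_add \<Rightarrow> 'y) \<Rightarrow> 'y topology \<Rightarrow> enat \<Rightarrow> 'x set \<Rightarrow> ('x \<Rightarrow> 'y) \<Rightarrow> bool" where
  "Cn_map scX PX scY TY n U f \<longleftrightarrow>
     (let W = {w \<in> topspace (Xpow PX 1). w 0 \<in> U}; phi = (\<lambda>w. f (w 0)) in
      (case n of enat k \<Rightarrow> Ck scX PX scY TY k 1 W phi
               | \<infinity> \<Rightarrow> (\<forall>k. Ck scX PX scY TY k 1 W phi)))"

end

theory Submission
  imports Defs
begin

text \<open>Composition is not jointly continuous on \<open>L(F,G)\<^sub>S \<times> L(E,F)\<^sub>S\<close>, but it is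
  continuous along every filter on which the right factor eventually stays in a compact set \<open>K\<close>:
  the operators of \<open>K\<close> map a set \<open>M \<in> S\<close> into a set \<open>N \<in> S\<close>, and on \<open>M\<close> we have
  \<open>r (A B - A\<^sub>0 B\<^sub>0) \<le> r ((A - A\<^sub>0) B) + r (A\<^sub>0 (B - B\<^sub>0))\<close>, where the first term is controlled
  on \<open>N\<close> and the second by continuity of \<open>A\<^sub>0\<close>.
  Hence \<open>z \<mapsto> g z \<circ> f z\<close> is continuous on compact sets, so on the k-spaces \<open>W \<subseteq> X\<^sup>m\<close> of
  the \<open>C\<^sup>k\<close> recursion; and composition is sequentially continuous, because a convergent
  sequence together with its limit is compact. Testing difference quotients along sequences
  \<open>t\<^sub>n \<rightarrow> 0\<close> gives the product rule \<open>d(g \<circ> f) = dg \<circ> f + g \<circ> df\<close>, whose right-hand side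
  is a sum of compositions of \<open>C\<^sup>k\<^sup>-\<^sup>1\<close> maps; induction on \<open>k\<close> concludes.\<close>

section \<open>Topologies defined by group seminorms\<close>

text \<open>This covers both \<^term>\<open>lcs_top P\<close> (with \<open>V = UNIV\<close>) and the operator topologies
  \<^const>\<open>Ltop\<close>, whose seminorms are finite and subadditive only on the subgroup \<^const>\<open>Lspace\<close>.\<close>

definition group_seminorms_on :: "'v::ab_group_add set \<Rightarrow> ('v \<Rightarrow> real) set \<Rightarrow> bool" where
  "group_seminorms_on V P \<longleftrightarrow> 0 \<in> V \<and> (\<forall>x\<in>V. \<forall>y\<in>V. x + y \<in> V \<and> - x \<in> V) \<and>
     (\<forall>p\<in>P. p 0 = 0 \<and> (\<forall>x\<in>V. p (- x) = p x) \<and> (\<forall>x\<in>V. \<forall>y\<in>V. p (x + y) \<le> p x + p y))"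

context
  fixes V :: "'v::ab_group_add set" and P :: "('v \<Rightarrow> real) set"
  assumes VP: "group_seminorms_on V P"
begin

lemma group_seminorms_on_closed:
  assumes "x \<in> V" "y \<in> V"
  shows "0 \<in> V" "x + y \<in> V" "- x \<in> V" "x - y \<in> V"
  using VP assms unfolding group_seminorms_on_def
  by (auto simp: diff_conv_add_uminus simp del: add_uminus_conv_diff)

lemma group_seminorm_zero: "p \<in> P \<Longrightarrow> p 0 = 0"
  and group_seminorm_minus: "p \<in> P \<Longrightarrow> x \<in> V \<Longrightarrow> p (- x) = p x"
  and group_seminorm_triangle: "p \<in> P \<Longrightarrow> x \<in> V \<Longrightarrow> y \<in> V \<Longrightarrow> p (x + y) \<le> p x + p y"
  using VP unfolding group_seminorms_on_def by auto

lemma group_seminorm_diff_triangle: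
  assumes "p \<in> P" "x \<in> V" "y \<in> V" "z \<in> V"
  shows "p (x - z) \<le> p (x - y) + p (y - z)"
  using group_seminorm_triangle[OF assms(1) group_seminorms_on_closed(4)[OF assms(2,3)]
      group_seminorms_on_closed(4)[OF assms(3,4)]] by simp

lemma group_seminorm_nonneg:
  assumes "p \<in> P" "x \<in> V"
  shows "0 \<le> p x"
  using group_seminorm_triangle[OF assms(1,2) group_seminorms_on_closed(3)[OF assms(2,2)]]
    group_seminorm_zero[OF assms(1)] group_seminorm_minus[OF assms] by simp

end

lemma openin_seminorm_topology:
  "openin (seminorm_topology V P) U \<longleftrightarrow> U \<subseteq> V \<and> (\<forall>x\<in>U. \<exists>F e. finite F \<and> F \<subseteq> P \<and> e > 0
       \<and> {y\<in>V. \<forall>p\<in>F. p (y - x) < e} \<subseteq> U)"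
proof -
  have "istopology (\<lambda>U. U \<subseteq> V \<and> (\<forall>x\<in>U. \<exists>F e. finite F \<and> F \<subseteq> P \<and> e > 0
       \<and> {y\<in>V. \<forall>p\<in>F. p (y - x) < e} \<subseteq> U))"
    unfolding istopology_def
  proof (intro conjI allI impI ballI)
    fix S T x
    assume S: "S \<subseteq> V \<and> (\<forall>x\<in>S. \<exists>F e. finite F \<and> F \<subseteq> P \<and> e > 0 \<and> {y\<in>V. \<forall>p\<in>F. p (y - x) < e} \<subseteq> S)"
      and T: "T \<subseteq> V \<and> (\<forall>x\<in>T. \<exists>F e. finite F \<and> F \<subseteq> P \<and> e > 0 \<and> {y\<in>V. \<forall>p\<in>F. p (y - x) < e} \<subseteq> T)"
      and x: "x \<in> S \<inter> T"
    obtain F1 e1 where 1: "finite F1" "F1 \<subseteq> P" "e1 > 0" "{y\<in>V. \<forall>p\<in>F1. p (y - x) < e1} \<subseteq> S"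
      using S x by blast
    obtain F2 e2 where 2: "finite F2" "F2 \<subseteq> P" "e2 > 0" "{y\<in>V. \<forall>p\<in>F2. p (y - x) < e2} \<subseteq> T"
      using T x by blast
    have "{y\<in>V. \<forall>p\<in>F1 \<union> F2. p (y - x) < min e1 e2} \<subseteq> S \<inter> T"
      using 1(4) 2(4) by force
    then show "\<exists>F e. finite F \<and> F \<subseteq> P \<and> e > 0 \<and> {y\<in>V. \<forall>p\<in>F. p (y - x) < e} \<subseteq> S \<inter> T"
      using 1 2 by (intro exI[of _ "F1 \<union> F2"] exI[of _ "min e1 e2"]) auto
  next
    fix K x
    assume K: "\<forall>S\<in>K. S \<subseteq> V \<and> (\<forall>x\<in>S. \<exists>F e. finite F \<and> F \<subseteq> P \<and> e > 0 \<and> {y\<in>V. \<forall>p\<in>F. p (y - x) < e} \<subseteq> S)"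
      and x: "x \<in> \<Union>K"
    then obtain S where "S \<in> K" "x \<in> S"
      by blast
    with K show "\<exists>F e. finite F \<and> F \<subseteq> P \<and> e > 0 \<and> {y\<in>V. \<forall>p\<in>F. p (y - x) < e} \<subseteq> \<Union>K"
      by (meson Union_upper order_trans)
  qed blast+
  then show ?thesis
    unfolding seminorm_topology_def by (simp add: topology_inverse')
qed

lemma topspace_seminorm_topology [simp]: "topspace (seminorm_topology V P) = V"
proof -
  have "openin (seminorm_topology V P) V"
    unfolding openin_seminorm_topology by (intro conjI ballI exI[of _ "{}"] exI[of _ 1]) auto
  then show ?thesis
    by (metis openin_seminorm_topology openin_subset openin_topspace subset_antisym)
qed

lemma openin_seminorm_ball:
  assumes VP: "group_seminorms_on V P" and "p \<in> P" "x \<in> V"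
  shows "openin (seminorm_topology V P) {y\<in>V. p (y - x) < e}"
  unfolding openin_seminorm_topology
proof (intro conjI ballI)
  fix z assume z: "z \<in> {y\<in>V. p (y - x) < e}"
  have "{y\<in>V. \<forall>q\<in>{p}. q (y - z) < e - p (z - x)} \<subseteq> {y\<in>V. p (y - x) < e}"
    using group_seminorm_diff_triangle[OF VP \<open>p \<in> P\<close> _ _ \<open>x \<in> V\<close>, of _ z] z by fastforce
  then show "\<exists>F d. finite F \<and> F \<subseteq> P \<and> d > 0 \<and> {y\<in>V. \<forall>q\<in>F. q (y - z) < d} \<subseteq> {y\<in>V. p (y - x) < e}"
    using z \<open>p \<in> P\<close> by (intro exI[of _ "{p}"] exI[of _ "e - p (z - x)"]) auto
qed auto

lemma limitin_seminorm_topology: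
  assumes VP: "group_seminorms_on V P"
  shows "limitin (seminorm_topology V P) f l F \<longleftrightarrow> l \<in> V \<and> eventually (\<lambda>x. f x \<in> V) F \<and>
     (\<forall>p\<in>P. ((\<lambda>x. p (f x - l)) \<longlongrightarrow> 0) F)"
proof
  assume lim: "limitin (seminorm_topology V P) f l F"
  then have l: "l \<in> V"
    using limitin_topspace by fastforce
  have V: "eventually (\<lambda>x. f x \<in> V) F"
    using lim l unfolding limitin_def by (metis openin_topspace topspace_seminorm_topology)
  have "((\<lambda>x. p (f x - l)) \<longlongrightarrow> 0) F" if "p \<in> P" for p
  proof (rule order_tendstoI)
    fix e :: real assume "0 < e"
    then have "l \<in> {y\<in>V. p (y - l) < e}"
      using l \<open>0 < e\<close> group_seminorm_zero[OF VP that] by auto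
    then have "eventually (\<lambda>x. f x \<in> {y\<in>V. p (y - l) < e}) F"
      using lim openin_seminorm_ball[OF VP that l, of e] unfolding limitin_def by blast
    then show "eventually (\<lambda>x. p (f x - l) < e) F"
      by (rule eventually_mono) simp
  next
    fix e :: real assume "e < 0"
    show "eventually (\<lambda>x. e < p (f x - l)) F"
      using V by eventually_elim
        (use \<open>e < 0\<close> group_seminorm_nonneg[OF VP that group_seminorms_on_closed(4)[OF VP _ l]] in force)
  qed
  with l V show "l \<in> V \<and> eventually (\<lambda>x. f x \<in> V) F \<and> (\<forall>p\<in>P. ((\<lambda>x. p (f x - l)) \<longlongrightarrow> 0) F)"
    by blast
next
  assume R: "l \<in> V \<and> eventually (\<lambda>x. f x \<in> V) F \<and> (\<forall>p\<in>P. ((\<lambda>x. p (f x - l)) \<longlongrightarrow> 0) F)"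
  show "limitin (seminorm_topology V P) f l F"
    unfolding limitin_def
  proof (intro conjI allI impI)
    fix U assume "openin (seminorm_topology V P) U \<and> l \<in> U"
    then obtain G e where G: "finite G" "G \<subseteq> P" "e > 0" "{y\<in>V. \<forall>p\<in>G. p (y - l) < e} \<subseteq> U"
      unfolding openin_seminorm_topology by blast
    have "eventually (\<lambda>x. \<forall>p\<in>G. p (f x - l) < e) F"
      using G R by (intro eventually_ball_finite ballI order_tendstoD(2)) auto
    moreover have "eventually (\<lambda>x. f x \<in> V) F"
      using R by blast
    ultimately show "eventually (\<lambda>x. f x \<in> U) F"
      by eventually_elim (use G(4) in auto)
  qed (use R in simp)
qed

context
  fixes V :: "'v::ab_group_add set" and P :: "('v \<Rightarrow> real) set"
  assumes VP: "group_seminorms_on V P"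
begin

lemma limitin_seminorm_topology_add:
  assumes f: "limitin (seminorm_topology V P) f l F" and g: "limitin (seminorm_topology V P) g m F"
  shows "limitin (seminorm_topology V P) (\<lambda>x. f x + g x) (l + m) F"
proof -
  note f' = f[unfolded limitin_seminorm_topology[OF VP]] and g' = g[unfolded limitin_seminorm_topology[OF VP]]
  then have lm: "l \<in> V" "m \<in> V" and ev: "eventually (\<lambda>x. f x \<in> V \<and> g x \<in> V) F"
    by (simp_all add: eventually_conj_iff)
  have "((\<lambda>x. p (f x + g x - (l + m))) \<longlongrightarrow> 0) F" if p: "p \<in> P" for p
  proof (rule tendsto_sandwich)
    show "eventually (\<lambda>x. 0 \<le> p (f x + g x - (l + m))) F"
      using ev by eventually_elim
        (use lm in \<open>auto intro!: group_seminorm_nonneg[OF VP p] group_seminorms_on_closed[OF VP]\<close>)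
    show "eventually (\<lambda>x. p (f x + g x - (l + m)) \<le> p (f x - l) + p (g x - m)) F"
      using ev by eventually_elim
        (use lm in \<open>auto simp: add_diff_add intro!: group_seminorm_triangle[OF VP p]
          group_seminorms_on_closed[OF VP]\<close>)
    show "((\<lambda>x. p (f x - l) + p (g x - m)) \<longlongrightarrow> 0) F"
      using f' g' p tendsto_add_zero by blast
  qed simp
  moreover have "eventually (\<lambda>x. f x + g x \<in> V) F"
    using ev by eventually_elim (use group_seminorms_on_closed[OF VP] in blast)
  ultimately show ?thesis
    unfolding limitin_seminorm_topology[OF VP] using lm group_seminorms_on_closed[OF VP] by blast
qed

lemma limitin_seminorm_topology_uminus:
  assumes f: "limitin (seminorm_topology V P) f l F"
  shows "limitin (seminorm_topology V P) (\<lambda>x. - f x) (- l) F"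
proof -
  note f' = f[unfolded limitin_seminorm_topology[OF VP]]
  then have l: "l \<in> V" and ev: "eventually (\<lambda>x. f x \<in> V) F"
    by auto
  have "((\<lambda>x. p (- f x - - l)) \<longlongrightarrow> 0) F" if p: "p \<in> P" for p
  proof -
    have "p (- y - - l) = p (y - l)" if "y \<in> V" for y
      using group_seminorm_minus[OF VP p group_seminorms_on_closed(4)[OF VP that l]] by simp
    then have "eventually (\<lambda>x. p (f x - l) = p (- f x - - l)) F"
      using ev by (auto elim: eventually_mono)
    with f' p show ?thesis
      by (auto intro: Lim_transform_eventually)
  qed
  moreover have "eventually (\<lambda>x. - f x \<in> V) F"
    using ev by (rule eventually_mono) (rule group_seminorms_on_closed(3)[OF VP])
  ultimately show ?thesis
    unfolding limitin_seminorm_topology[OF VP] using l group_seminorms_on_closed[OF VP] by blast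
qed

lemma continuous_map_seminorm_topology_add:
  assumes "continuous_map X (seminorm_topology V P) f" "continuous_map X (seminorm_topology V P) g"
  shows "continuous_map X (seminorm_topology V P) (\<lambda>x. f x + g x)"
  using assms limitin_seminorm_topology_add unfolding continuous_map_atin by blast

lemma continuous_map_seminorm_topology_uminus:
  assumes "continuous_map X (seminorm_topology V P) f"
  shows "continuous_map X (seminorm_topology V P) (\<lambda>x. - f x)"
  using assms limitin_seminorm_topology_uminus unfolding continuous_map_atin by blast

lemma continuous_map_group_seminorm:
  assumes p: "p \<in> P"
  shows "continuous_map (seminorm_topology V P) euclideanreal p"
  unfolding continuous_map_atin limitin_canonical_iff
proof
  fix x assume x: "x \<in> topspace (seminorm_topology V P)"
  have "limitin (seminorm_topology V P) (\<lambda>y. y) x (atin (seminorm_topology V P) x)"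
    using continuous_map_atin[THEN iffD1, OF continuous_map_id, rule_format, OF x] by (simp add: id_def)
  then have lim: "((\<lambda>y. p (y - x)) \<longlongrightarrow> 0) (atin (seminorm_topology V P) x)"
    and V: "eventually (\<lambda>y. y \<in> V) (atin (seminorm_topology V P) x)"
    using p unfolding limitin_seminorm_topology[OF VP] by auto
  have "eventually (\<lambda>y. norm (p y - p x) \<le> p (y - x)) (atin (seminorm_topology V P) x)"
    using V
  proof eventually_elim
    case (elim y)
    then show ?case
      using x group_seminorm_diff_triangle[OF VP p, of y x 0] group_seminorm_diff_triangle[OF VP p, of x y 0]
        group_seminorm_minus[OF VP p, of "y - x"] group_seminorms_on_closed[OF VP, of y x]
      by (simp add: abs_le_iff)
  qed
  then show "(p \<longlongrightarrow> p x) (atin (seminorm_topology V P) x)"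
    using Lim_null_comparison[OF _ lim, of "\<lambda>y. p y - p x"] unfolding LIM_zero_iff by blast
qed

lemma compactin_imp_bdd_above_group_seminorm:
  assumes "compactin (seminorm_topology V P) K" "p \<in> P"
  shows "bdd_above (p ` K)"
proof -
  have "compact (p ` K)"
    using image_compactin[OF assms(1) continuous_map_group_seminorm[OF assms(2)]] by simp
  then show ?thesis
    by (intro bounded_imp_bdd_above compact_imp_bounded)
qed

end

section \<open>Spaces of continuous linear maps\<close>

lemma lcs_vector_space_pair: "lcs scE PE \<Longrightarrow> lcs scF PF \<Longrightarrow> vector_space_pair scE scF"
  unfolding lcs_def vector_space_pair_def by blast

context
  fixes sc :: "'k::real_normed_field \<Rightarrow> 'v::ab_group_add \<Rightarrow> 'v" and P :: "('v \<Rightarrow> real) set"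
  assumes lcs: "lcs sc P"
begin

lemma lcs_module: "module sc"
  using lcs unfolding lcs_def by (simp add: module_iff_vector_space)

lemma lcs_seminorm_scale: "p \<in> P \<Longrightarrow> p (sc t x) = norm t * p x"
  and lcs_seminorm_nonneg: "p \<in> P \<Longrightarrow> 0 \<le> p x"
  using lcs unfolding lcs_def seminorm_def by auto

lemma lcs_seminorm_scaleR: "p \<in> P \<Longrightarrow> p (sc (of_real c) x) = \<bar>c\<bar> * p x"
  by (simp add: lcs_seminorm_scale)

lemma group_seminorms_on_lcs: "group_seminorms_on UNIV P"
proof -
  have "p 0 = 0" "p (- x) = p x" if "p \<in> P" for p x
    using lcs_seminorm_scale[OF that, of 0 0] lcs_seminorm_scale[OF that, of "-1" x]
    by (simp_all add: module.scale_zero_left[OF lcs_module] module.scale_minus_left[OF lcs_module]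
        module.scale_one[OF lcs_module])
  then show ?thesis
    using lcs unfolding group_seminorms_on_def lcs_def seminorm_def by auto
qed

lemma continuous_map_lcs_add:
  "continuous_map X (lcs_top P) f \<Longrightarrow> continuous_map X (lcs_top P) g
    \<Longrightarrow> continuous_map X (lcs_top P) (\<lambda>x. f x + g x)"
  by (rule continuous_map_seminorm_topology_add[OF group_seminorms_on_lcs])

lemma continuous_map_lcs_uminus:
  "continuous_map X (lcs_top P) f \<Longrightarrow> continuous_map X (lcs_top P) (\<lambda>x. - f x)"
  by (rule continuous_map_seminorm_topology_uminus[OF group_seminorms_on_lcs])

lemma Sfam_bdd_above: "M \<in> Sfam b P \<Longrightarrow> p \<in> P \<Longrightarrow> bdd_above (p ` M)"
  using compactin_imp_bdd_above_group_seminorm[OF group_seminorms_on_lcs]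
  unfolding Sfam_def bounded_sets_def compact_sets_def by (auto split: if_splits)

end

lemma topspace_Ltop [simp]: "topspace (Ltop b scE PE scF PF) = Lspace scE PE scF PF"
  by (simp add: Ltop_def)

text \<open>The seminorm \<open>p\<^sub>M\<^sub>,\<^sub>q(T) = sup\<^sub>x\<^sub>\<in>\<^sub>M q (T x)\<close> of \<open>L(E,F)\<^sub>S\<close>; a junk value unless
  \<open>q \<circ> T\<close> is bounded on \<open>M\<close>.\<close>

definition sup_seminorm :: "'e set \<Rightarrow> ('f \<Rightarrow> real) \<Rightarrow> ('e \<Rightarrow> 'f) \<Rightarrow> real" where
  "sup_seminorm M q T = Sup (insert 0 ((\<lambda>x. q (T x)) ` M))"

lemma Lseminorms_eq: "Lseminorms b PE PF = {sup_seminorm M q | M q. M \<in> Sfam b PE \<and> q \<in> PF}"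
  unfolding Lseminorms_def sup_seminorm_def by simp

lemma sup_seminorm_least: "(\<And>x. x \<in> M \<Longrightarrow> q (T x) \<le> c) \<Longrightarrow> 0 \<le> c \<Longrightarrow> sup_seminorm M q T \<le> c"
  unfolding sup_seminorm_def by (intro cSup_least) auto

context
  fixes scE :: "'k::real_normed_field \<Rightarrow> 'e::ab_group_add \<Rightarrow> 'e" and PE :: "('e \<Rightarrow> real) set"
    and scF :: "'k \<Rightarrow> 'f::ab_group_add \<Rightarrow> 'f" and PF :: "('f \<Rightarrow> real) set"
  assumes E: "lcs scE PE" and F: "lcs scF PF"
begin

lemma Lspace_linear_diff: "T \<in> Lspace scE PE scF PF \<Longrightarrow> T (x - y) = T x - T y"
  and Lspace_linear_zero: "T \<in> Lspace scE PE scF PF \<Longrightarrow> T 0 = 0"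
  and Lspace_linear_scale: "T \<in> Lspace scE PE scF PF \<Longrightarrow> T (scE c x) = scF c (T x)"
  using vector_space_pair.linear_diff vector_space_pair.linear_0 vector_space_pair.linear_scale
    lcs_vector_space_pair[OF E F] unfolding Lspace_def by blast+

lemma Lspace_seminorm_bound_from_ball:
  assumes T: "T \<in> Lspace scE PE scF PF" and q: "q \<in> PF" and G: "finite G" "G \<subseteq> PE" and "0 < e"
    and ball: "\<And>y. \<forall>p\<in>G. p y < e \<Longrightarrow> q (T y) < 1"
  shows "q (T v) \<le> inverse e * (\<Sum>p\<in>G. p v)"
proof (rule field_le_epsilon)
  fix d :: real assume "0 < d"
  define \<sigma> where "\<sigma> = (\<Sum>p\<in>G. p v)"
  define s where "s = \<sigma> + e * d"
  have "0 \<le> \<sigma>"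
    unfolding \<sigma>_def using G(2) by (intro sum_nonneg lcs_seminorm_nonneg[OF E]) auto
  then have s: "\<sigma> < s" "0 < s"
    unfolding s_def using \<open>0 < d\<close> \<open>0 < e\<close> by (simp_all add: add_nonneg_pos)
  have "q (T (scE (of_real (e / s)) v)) < 1"
  proof (rule ball, rule ballI)
    fix p assume p: "p \<in> G"
    then have "p v \<le> \<sigma>"
      unfolding \<sigma>_def using G lcs_seminorm_nonneg[OF E] by (intro member_le_sum) auto
    with s have "e / s * p v < e"
      using \<open>0 < e\<close> by (simp add: field_simps)
    moreover have "p (scE (of_real (e / s)) v) = e / s * p v"
      using lcs_seminorm_scaleR[OF E, of p "e / s" v] p G(2) \<open>0 < e\<close> s by auto
    ultimately show "p (scE (of_real (e / s)) v) < e"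
      by simp
  qed
  moreover have "q (T (scE (of_real (e / s)) v)) = e / s * q (T v)"
    using lcs_seminorm_scaleR[OF F q, of "e / s" "T v"] Lspace_linear_scale[OF T] \<open>0 < e\<close> s by auto
  ultimately have "e / s * q (T v) < 1"
    by simp
  then show "q (T v) \<le> inverse e * \<sigma> + d"
    using \<open>0 < e\<close> s unfolding s_def by (simp add: field_simps)
qed

lemma Lspace_seminorm_bound:
  assumes T: "T \<in> Lspace scE PE scF PF" and q: "q \<in> PF"
  obtains G C where "finite G" "G \<subseteq> PE" "0 \<le> C" "\<And>v. q (T v) \<le> C * (\<Sum>p\<in>G. p v)"
proof -
  have "continuous_map (lcs_top PE) (lcs_top PF) T"
    using T unfolding Lspace_def by blast
  from openin_continuous_map_preimage[OF this
      openin_seminorm_ball[OF group_seminorms_on_lcs[OF F] q, where x=0 and e=1]]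
  have "openin (lcs_top PE) {v. q (T v) < 1}"
    by simp
  moreover have "q (T 0) < 1"
    using Lspace_linear_zero[OF T] group_seminorm_zero[OF group_seminorms_on_lcs[OF F] q] by simp
  ultimately obtain G e where G: "finite G" "G \<subseteq> PE" "e > 0"
    and "{y. \<forall>p\<in>G. p (y - 0) < e} \<subseteq> {v. q (T v) < 1}"
    unfolding openin_seminorm_topology by (elim conjE) (drule bspec[where x=0], auto)
  then have "q (T v) \<le> inverse e * (\<Sum>p\<in>G. p v)" for v
    by (intro Lspace_seminorm_bound_from_ball[OF T q]) auto
  moreover have "0 \<le> inverse e"
    using G(3) by simp
  ultimately show thesis
    using that G(1,2) by blast
qed

lemma bdd_above_Lspace_Sfam:
  assumes T: "T \<in> Lspace scE PE scF PF" and q: "q \<in> PF" and M: "M \<in> Sfam b PE"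
  shows "bdd_above ((\<lambda>x. q (T x)) ` M)"
proof -
  obtain G C where G: "finite G" "G \<subseteq> PE" "0 \<le> C" "\<And>v. q (T v) \<le> C * (\<Sum>p\<in>G. p v)"
    using Lspace_seminorm_bound[OF T q] by blast
  have "\<forall>p\<in>G. \<exists>B. \<forall>x\<in>M. p x \<le> B"
    using Sfam_bdd_above[OF E M] G(2) unfolding bdd_above_def by blast
  then obtain B where B: "\<And>p x. p \<in> G \<Longrightarrow> x \<in> M \<Longrightarrow> p x \<le> B p"
    by metis
  have "q (T x) \<le> C * (\<Sum>p\<in>G. B p)" if "x \<in> M" for x
    using G(4)[of x] mult_left_mono[OF sum_mono[of G "\<lambda>p. p x" B] G(3)] B that by force
  then show ?thesis
    by (intro bdd_aboveI2)
qed

lemma sup_seminorm_upper: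
  "T \<in> Lspace scE PE scF PF \<Longrightarrow> q \<in> PF \<Longrightarrow> M \<in> Sfam b PE \<Longrightarrow> x \<in> M
    \<Longrightarrow> q (T x) \<le> sup_seminorm M q T"
  unfolding sup_seminorm_def by (intro cSup_upper) (auto simp: bdd_above_Lspace_Sfam)

lemma sup_seminorm_nonneg:
  "T \<in> Lspace scE PE scF PF \<Longrightarrow> q \<in> PF \<Longrightarrow> M \<in> Sfam b PE \<Longrightarrow> 0 \<le> sup_seminorm M q T"
  unfolding sup_seminorm_def by (intro cSup_upper) (auto simp: bdd_above_Lspace_Sfam)

lemma Lspace_zero: "0 \<in> Lspace scE PE scF PF"
  using vector_space_pair.linear_zero[OF lcs_vector_space_pair[OF E F]]
  unfolding Lspace_def zero_fun_def by simp

lemma Lspace_add: "T \<in> Lspace scE PE scF PF \<Longrightarrow> S \<in> Lspace scE PE scF PF \<Longrightarrow> T + S \<in> Lspace scE PE scF PF"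
  using vector_space_pair.linear_compose_add[OF lcs_vector_space_pair[OF E F]]
    continuous_map_lcs_add[OF F]
  unfolding Lspace_def plus_fun_def by blast

lemma Lspace_uminus: "T \<in> Lspace scE PE scF PF \<Longrightarrow> - T \<in> Lspace scE PE scF PF"
  using vector_space_pair.linear_compose_neg[OF lcs_vector_space_pair[OF E F]]
    continuous_map_lcs_uminus[OF F]
  unfolding Lspace_def fun_Compl_def by blast

lemma Lspace_diff: "T \<in> Lspace scE PE scF PF \<Longrightarrow> S \<in> Lspace scE PE scF PF \<Longrightarrow> T - S \<in> Lspace scE PE scF PF"
  using Lspace_add[OF _ Lspace_uminus] by simp

lemma group_seminorms_on_Lspace: "group_seminorms_on (Lspace scE PE scF PF) (Lseminorms b PE PF)"
  unfolding group_seminorms_on_def Lseminorms_eq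
proof (intro conjI ballI; (elim CollectE exE conjE)?)
  show "0 \<in> Lspace scE PE scF PF"
    by (rule Lspace_zero)
  fix T S assume "T \<in> Lspace scE PE scF PF" "S \<in> Lspace scE PE scF PF"
  then show "T + S \<in> Lspace scE PE scF PF" "- T \<in> Lspace scE PE scF PF"
    by (simp_all add: Lspace_add Lspace_uminus)
next
  fix p M q assume p: "p = sup_seminorm M q" and M: "M \<in> Sfam b PE" and q: "q \<in> PF"
  note qF = group_seminorms_on_lcs[OF F]
  show "p 0 = 0"
    unfolding p sup_seminorm_def using group_seminorm_zero[OF qF q] by (simp add: image_constant_conv)
  show "p (- T) = p T" for T
    unfolding p sup_seminorm_def using group_seminorm_minus[OF qF q] by simp
  fix T S assume T: "T \<in> Lspace scE PE scF PF" and S: "S \<in> Lspace scE PE scF PF"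
  show "p (T + S) \<le> p T + p S"
    unfolding p
  proof (rule sup_seminorm_least)
    fix v assume v: "v \<in> M"
    have "q ((T + S) v) \<le> q (T v) + q (S v)"
      using group_seminorm_triangle[OF qF q] by simp
    also have "\<dots> \<le> sup_seminorm M q T + sup_seminorm M q S"
      using sup_seminorm_upper[OF T q M v] sup_seminorm_upper[OF S q M v] by simp
    finally show "q ((T + S) v) \<le> sup_seminorm M q T + sup_seminorm M q S" .
  qed (use sup_seminorm_nonneg[OF T q M] sup_seminorm_nonneg[OF S q M] in simp)
qed

lemma limitin_Ltop:
  "limitin (Ltop b scE PE scF PF) f l F \<longleftrightarrow> l \<in> Lspace scE PE scF PF \<and>
     eventually (\<lambda>x. f x \<in> Lspace scE PE scF PF) F \<and>
     (\<forall>M\<in>Sfam b PE. \<forall>q\<in>PF. ((\<lambda>x. sup_seminorm M q (f x - l)) \<longlongrightarrow> 0) F)"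
proof -
  have "(\<forall>p\<in>{sup_seminorm M q |M q. M \<in> Sfam b PE \<and> q \<in> PF}. Q p)
      \<longleftrightarrow> (\<forall>M\<in>Sfam b PE. \<forall>q\<in>PF. Q (sup_seminorm M q))" for Q
    by blast
  then show ?thesis
    unfolding Ltop_def limitin_seminorm_topology[OF group_seminorms_on_Lspace]
    unfolding Lseminorms_eq by simp
qed

end

lemma Lspace_comp:
  "T \<in> Lspace scE PE scF PF \<Longrightarrow> S \<in> Lspace scF PF scG PG \<Longrightarrow> S \<circ> T \<in> Lspace scE PE scG PG"
  unfolding Lspace_def using Vector_Spaces.linear_compose continuous_map_compose by blast

section \<open>Continuity properties of composition\<close>

lemma limitin_compose_filterlim:
  "limitin X g l F \<Longrightarrow> filterlim f F G \<Longrightarrow> limitin X (\<lambda>n. g (f n)) l G"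
  unfolding limitin_def filterlim_iff by blast

lemma sequentially_imp_limitin_at:
  fixes a :: "'a::first_countable_topology"
  assumes "l \<in> topspace X"
    and "\<And>f. \<forall>n. f n \<noteq> a \<Longrightarrow> f \<longlonglongrightarrow> a \<Longrightarrow> limitin X (\<lambda>n. g (f n)) l sequentially"
  shows "limitin X g l (at a)"
  unfolding limitin_def
proof (intro conjI allI impI)
  fix U assume "openin X U \<and> l \<in> U"
  then show "eventually (\<lambda>x. g x \<in> U) (at a)"
    using assms(2) unfolding limitin_def by (blast intro: sequentially_imp_eventually_at)
qed (fact assms(1))

context
  fixes scE :: "'k::real_normed_field \<Rightarrow> 'e::ab_group_add \<Rightarrow> 'e" and PE :: "('e \<Rightarrow> real) set"
    and scF :: "'k \<Rightarrow> 'f::ab_group_add \<Rightarrow> 'f" and PF :: "('f \<Rightarrow> real) set"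
  assumes E: "lcs scE PE" and F: "lcs scF PF"
begin

lemma limitin_Ltop_add:
  "limitin (Ltop b scE PE scF PF) f l G \<Longrightarrow> limitin (Ltop b scE PE scF PF) g m G
    \<Longrightarrow> limitin (Ltop b scE PE scF PF) (\<lambda>x. f x + g x) (l + m) G"
  unfolding Ltop_def by (rule limitin_seminorm_topology_add[OF group_seminorms_on_Lspace[OF E F]])

lemma eval_diff_le_sup_seminorm:
  assumes "T \<in> Lspace scE PE scF PF" "T0 \<in> Lspace scE PE scF PF" "q \<in> PF" "M \<in> Sfam b PE" "v \<in> M"
  shows "q (T v - T0 v0) \<le> sup_seminorm M q (T - T0) + q (T0 v - T0 v0)"
proof -
  have "q (T v - T0 v) \<le> sup_seminorm M q (T - T0)"
    using sup_seminorm_upper[OF E F Lspace_diff[OF E F assms(1,2)] assms(3-5)] by simp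
  then show ?thesis
    using group_seminorm_diff_triangle[OF group_seminorms_on_lcs[OF F] assms(3), of "T v" "T0 v" "T0 v0"]
    by simp
qed

lemma continuous_map_Ltop_eval:
  assumes M: "M \<in> Sfam b PE"
  shows "continuous_map (prod_topology (Ltop b scE PE scF PF) (subtopology (lcs_top PE) M)) (lcs_top PF)
           (\<lambda>z. fst z (snd z))"
    (is "continuous_map ?P _ _")
  unfolding continuous_map_atin
proof
  fix z assume z: "z \<in> topspace ?P"
  then obtain T0 v0 where z_eq: "z = (T0, v0)" and T0: "T0 \<in> Lspace scE PE scF PF" and "v0 \<in> M"
    by auto
  let ?F = "atin ?P z"
  have "limitin (Ltop b scE PE scF PF) fst T0 ?F"
    using continuous_map_atin[THEN iffD1, OF continuous_map_fst, rule_format, OF z] z_eq by simp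
  then have lim_T: "((\<lambda>w. sup_seminorm M q (fst w - T0)) \<longlongrightarrow> 0) ?F" if "q \<in> PF" for q
    using M that unfolding limitin_Ltop[OF E F] by blast
  have "limitin (lcs_top PE) snd v0 ?F"
    using continuous_map_atin[THEN iffD1, OF continuous_map_snd, rule_format, OF z] z_eq
    unfolding limitin_subtopology by simp
  from continuous_map_limit[OF _ this] T0
  have "limitin (lcs_top PF) (\<lambda>w. T0 (snd w)) (T0 v0) ?F"
    unfolding Lspace_def o_def by blast
  then have lim_v: "((\<lambda>w. q (T0 (snd w) - T0 v0)) \<longlongrightarrow> 0) ?F" if "q \<in> PF" for q
    using that unfolding limitin_seminorm_topology[OF group_seminorms_on_lcs[OF F]] by blast
  have ev: "eventually (\<lambda>w. w \<in> topspace ?P) ?F"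
    unfolding eventually_atin by auto
  have "((\<lambda>w. q (fst w (snd w) - T0 v0)) \<longlongrightarrow> 0) ?F" if q: "q \<in> PF" for q
  proof (rule tendsto_sandwich)
    show "eventually (\<lambda>w. 0 \<le> q (fst w (snd w) - T0 v0)) ?F"
      by (simp add: lcs_seminorm_nonneg[OF F q])
    show "eventually (\<lambda>w. q (fst w (snd w) - T0 v0)
        \<le> sup_seminorm M q (fst w - T0) + q (T0 (snd w) - T0 v0)) ?F"
      using ev by eventually_elim (auto intro: eval_diff_le_sup_seminorm[OF _ T0 q M])
    show "((\<lambda>w. sup_seminorm M q (fst w - T0) + q (T0 (snd w) - T0 v0)) \<longlongrightarrow> 0) ?F"
      using lim_T[OF q] lim_v[OF q] by (rule tendsto_add_zero)
  qed simp
  then show "limitin (lcs_top PF) (\<lambda>z. fst z (snd z)) (fst z (snd z)) ?F"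
    unfolding limitin_seminorm_topology[OF group_seminorms_on_lcs[OF F]] z_eq by simp
qed

lemma Sfam_eval_image:
  assumes K: "compactin (Ltop b scE PE scF PF) K" and M: "M \<in> Sfam b PE"
  shows "{T v | T v. T \<in> K \<and> v \<in> M} \<in> Sfam b PF"
proof (cases b)
  case True
  have KL: "K \<subseteq> Lspace scE PE scF PF"
    using compactin_subset_topspace[OF K] by simp
  have "bdd_above (q ` {T v | T v. T \<in> K \<and> v \<in> M})" if q: "q \<in> PF" for q
  proof -
    have "sup_seminorm M q \<in> Lseminorms b PE PF"
      unfolding Lseminorms_eq using M q by blast
    with K have "bdd_above (sup_seminorm M q ` K)"
      unfolding Ltop_def by (rule compactin_imp_bdd_above_group_seminorm[OF group_seminorms_on_Lspace[OF E F]])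
    then obtain c where c: "\<And>T. T \<in> K \<Longrightarrow> sup_seminorm M q T \<le> c"
      unfolding bdd_above_def by auto
    have "q (T v) \<le> c" if "T \<in> K" "v \<in> M" for T v
      using sup_seminorm_upper[OF E F _ q M that(2)] KL c[OF that(1)] that(1) by force
    then show ?thesis
      by (intro bdd_aboveI2) blast
  qed
  with True show ?thesis
    unfolding Sfam_def bounded_sets_def by auto
next
  case False
  then have "compactin (lcs_top PE) M"
    using M unfolding Sfam_def compact_sets_def by auto
  then have "compactin (prod_topology (Ltop b scE PE scF PF) (subtopology (lcs_top PE) M)) (K \<times> M)"
    using K by (simp add: compactin_Times compactin_subtopology)
  from image_compactin[OF this continuous_map_Ltop_eval[OF M]]
  have "compactin (lcs_top PF) ((\<lambda>z. fst z (snd z)) ` (K \<times> M))" .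
  moreover have "(\<lambda>z. fst z (snd z)) ` (K \<times> M) = {T v | T v. T \<in> K \<and> v \<in> M}"
    by force
  ultimately have "compactin (lcs_top PF) {T v | T v. T \<in> K \<and> v \<in> M}"
    by simp
  with False show ?thesis
    unfolding Sfam_def compact_sets_def by auto
qed

end

context
  fixes scE :: "'k::real_normed_field \<Rightarrow> 'e::ab_group_add \<Rightarrow> 'e" and PE :: "('e \<Rightarrow> real) set"
    and scF :: "'k \<Rightarrow> 'f::ab_group_add \<Rightarrow> 'f" and PF :: "('f \<Rightarrow> real) set"
    and scG :: "'k \<Rightarrow> 'g::ab_group_add \<Rightarrow> 'g" and PG :: "('g \<Rightarrow> real) set"
  assumes E: "lcs scE PE" and F: "lcs scF PF" and G: "lcs scG PG"
begin

lemma sup_seminorm_comp_diff_le: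
  assumes A: "A \<in> Lspace scF PF scG PG" and A0: "A0 \<in> Lspace scF PF scG PG"
    and B: "B \<in> Lspace scE PE scF PF" and B0: "B0 \<in> Lspace scE PE scF PF"
    and r: "r \<in> PG" and M: "M \<in> Sfam b PE" and N: "N \<in> Sfam b PF" and BMN: "B ` M \<subseteq> N"
    and Q: "finite Q" "Q \<subseteq> PF" and C: "0 \<le> C" and A0_bound: "\<And>v. r (A0 v) \<le> C * (\<Sum>q\<in>Q. q v)"
  shows "sup_seminorm M r ((A \<circ> B) - (A0 \<circ> B0))
    \<le> sup_seminorm N r (A - A0) + C * (\<Sum>q\<in>Q. sup_seminorm M q (B - B0))"
proof (rule sup_seminorm_least)
  fix v assume v: "v \<in> M"
  have "r (((A \<circ> B) - (A0 \<circ> B0)) v) \<le> r (A (B v) - A0 (B v)) + r (A0 (B v) - A0 (B0 v))"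
    using group_seminorm_diff_triangle[OF group_seminorms_on_lcs[OF G] r] by simp
  moreover have "r (A (B v) - A0 (B v)) \<le> sup_seminorm N r (A - A0)"
    using sup_seminorm_upper[OF F G Lspace_diff[OF F G A A0] r N] BMN v by auto
  moreover have "r (A0 (B v) - A0 (B0 v)) \<le> C * (\<Sum>q\<in>Q. q ((B - B0) v))"
    using A0_bound[of "(B - B0) v"] Lspace_linear_diff[OF F G A0] by simp
  moreover have "C * (\<Sum>q\<in>Q. q ((B - B0) v)) \<le> C * (\<Sum>q\<in>Q. sup_seminorm M q (B - B0))"
    using sup_seminorm_upper[OF E F Lspace_diff[OF E F B B0] _ M v] Q C
    by (intro mult_left_mono sum_mono) auto
  ultimately show "r (((A \<circ> B) - (A0 \<circ> B0)) v)
      \<le> sup_seminorm N r (A - A0) + C * (\<Sum>q\<in>Q. sup_seminorm M q (B - B0))"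
    by linarith
next
  show "0 \<le> sup_seminorm N r (A - A0) + C * (\<Sum>q\<in>Q. sup_seminorm M q (B - B0))"
    using sup_seminorm_nonneg[OF F G Lspace_diff[OF F G A A0] r N]
      sup_seminorm_nonneg[OF E F Lspace_diff[OF E F B B0] _ M] Q C
    by (intro add_nonneg_nonneg mult_nonneg_nonneg sum_nonneg) auto
qed

lemma limitin_Ltop_comp:
  assumes A: "limitin (Ltop b scF PF scG PG) A A0 Fi"
    and B: "limitin (Ltop b scE PE scF PF) B B0 Fi"
    and K: "compactin (Ltop b scE PE scF PF) K" and BK: "eventually (\<lambda>i. B i \<in> K) Fi"
  shows "limitin (Ltop b scE PE scG PG) (\<lambda>i. A i \<circ> B i) (A0 \<circ> B0) Fi"
proof -
  note A' = A[unfolded limitin_Ltop[OF F G]] and B' = B[unfolded limitin_Ltop[OF E F]]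
  have ev: "eventually (\<lambda>i. A i \<in> Lspace scF PF scG PG \<and> B i \<in> Lspace scE PE scF PF \<and> B i \<in> K) Fi"
    using A' B' BK by (simp add: eventually_conj_iff)
  have "((\<lambda>i. sup_seminorm M r ((A i \<circ> B i) - (A0 \<circ> B0))) \<longlongrightarrow> 0) Fi"
    if M: "M \<in> Sfam b PE" and r: "r \<in> PG" for M r
  proof -
    define N where "N = {T v | T v. T \<in> K \<and> v \<in> M}"
    have N: "N \<in> Sfam b PF"
      unfolding N_def using Sfam_eval_image[OF E F K M] .
    have KMN: "T ` M \<subseteq> N" if "T \<in> K" for T
      unfolding N_def using that by blast
    obtain Q C where Q: "finite Q" "Q \<subseteq> PF" and C: "0 \<le> C"
      and A0_bound: "\<And>v. r (A0 v) \<le> C * (\<Sum>q\<in>Q. q v)"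
      using Lspace_seminorm_bound[OF F G _ r] A' by blast
    show ?thesis
    proof (rule tendsto_sandwich)
      show "eventually (\<lambda>i. 0 \<le> sup_seminorm M r ((A i \<circ> B i) - (A0 \<circ> B0))) Fi"
        using ev by eventually_elim
          (use A' B' in \<open>blast intro: sup_seminorm_nonneg[OF E G _ r M] Lspace_diff[OF E G] Lspace_comp\<close>)
      show "eventually (\<lambda>i. sup_seminorm M r ((A i \<circ> B i) - (A0 \<circ> B0))
          \<le> sup_seminorm N r (A i - A0) + C * (\<Sum>q\<in>Q. sup_seminorm M q (B i - B0))) Fi"
        using ev by eventually_elim
          (use A' B' KMN in \<open>blast intro: sup_seminorm_comp_diff_le[OF _ _ _ _ r M N _ Q C A0_bound]\<close>)
      show "((\<lambda>i. sup_seminorm N r (A i - A0) + C * (\<Sum>q\<in>Q. sup_seminorm M q (B i - B0))) \<longlongrightarrow> 0) Fi"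
        using A' B' N M r Q
        by (intro tendsto_add_zero tendsto_mult_right_zero tendsto_null_sum) auto
    qed simp
  qed
  with A' B' show ?thesis
    unfolding limitin_Ltop[OF E G]
    by (auto elim: eventually_mono[OF eventually_conj] intro: Lspace_comp)
qed

lemma limitin_Ltop_comp_sequentially:
  assumes A: "limitin (Ltop b scF PF scG PG) A A0 sequentially"
    and B: "limitin (Ltop b scE PE scF PF) B B0 sequentially"
  shows "limitin (Ltop b scE PE scG PG) (\<lambda>n. A n \<circ> B n) (A0 \<circ> B0) sequentially"
proof -
  obtain n0 where n0: "\<And>n. n \<ge> n0 \<Longrightarrow> B n \<in> Lspace scE PE scF PF"
    using B unfolding limitin_Ltop[OF E F] eventually_sequentially by blast
  have "compactin (Ltop b scE PE scF PF) (insert B0 (B ` {n0..}))"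
    using n0 by (intro compactin_sequence_with_limit[OF B]) auto
  moreover have "eventually (\<lambda>n. B n \<in> insert B0 (B ` {n0..})) sequentially"
    unfolding eventually_sequentially by auto
  ultimately show ?thesis
    by (rule limitin_Ltop_comp[OF A B])
qed

lemma continuous_map_Ltop_comp:
  assumes X: "k_space X"
    and A: "continuous_map X (Ltop b scF PF scG PG) A" and B: "continuous_map X (Ltop b scE PE scF PF) B"
  shows "continuous_map X (Ltop b scE PE scG PG) (\<lambda>x. A x \<circ> B x)"
proof (rule continuous_map_from_k_space[OF X])
  fix C assume C: "compactin X C"
  let ?XC = "subtopology X C"
  have K: "compactin (Ltop b scE PE scF PF) (B ` topspace ?XC)"
    using image_compactin[OF _ continuous_map_from_subtopology[OF B]] compact_space_subtopology[OF C]
    unfolding compact_space_def by blast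
  show "continuous_map ?XC (Ltop b scE PE scG PG) (\<lambda>x. A x \<circ> B x)"
    unfolding continuous_map_atin
  proof
    fix x assume x: "x \<in> topspace ?XC"
    have "eventually (\<lambda>y. B y \<in> B ` topspace ?XC) (atin ?XC x)"
      unfolding eventually_atin using x by auto
    with continuous_map_from_subtopology[OF A] continuous_map_from_subtopology[OF B] x K
    show "limitin (Ltop b scE PE scG PG) (\<lambda>x. A x \<circ> B x) (A x \<circ> B x) (atin ?XC x)"
      unfolding continuous_map_atin by (blast intro: limitin_Ltop_comp)
  qed
qed

lemma Lscale_comp_diff:
  assumes A0: "A0 \<in> Lspace scF PF scG PG"
  shows "Lscale scG c ((A \<circ> B) - (A0 \<circ> B0)) = (Lscale scG c (A - A0) \<circ> B) + (A0 \<circ> Lscale scF c (B - B0))"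
proof
  fix v
  have "A0 (scF c (B v - B0 v)) = scG c (A0 (B v)) - scG c (A0 (B0 v))"
    using Lspace_linear_scale[OF F G A0] Lspace_linear_diff[OF F G A0]
      module.scale_right_diff_distrib[OF lcs_module[OF G]] by simp
  then show "Lscale scG c ((A \<circ> B) - (A0 \<circ> B0)) v = ((Lscale scG c (A - A0) \<circ> B) + (A0 \<circ> Lscale scF c (B - B0))) v"
    unfolding Lscale_def by (simp add: module.scale_right_diff_distrib[OF lcs_module[OF G]])
qed

lemma limitin_Ltop_comp_diff_quotient:
  fixes A :: "'k \<Rightarrow> 'f \<Rightarrow> 'g" and B :: "'k \<Rightarrow> 'e \<Rightarrow> 'f"
  assumes A': "limitin (Ltop b scF PF scG PG) (\<lambda>t. Lscale scG (inverse t) (A t - A0)) A' (at 0)"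
    and B: "limitin (Ltop b scE PE scF PF) B B0 (at 0)"
    and B': "limitin (Ltop b scE PE scF PF) (\<lambda>t. Lscale scF (inverse t) (B t - B0)) B' (at 0)"
    and A0: "A0 \<in> Lspace scF PF scG PG"
  shows "limitin (Ltop b scE PE scG PG) (\<lambda>t. Lscale scG (inverse t) ((A t \<circ> B t) - (A0 \<circ> B0)))
           ((A' \<circ> B0) + (A0 \<circ> B')) (at 0)"
proof (rule sequentially_imp_limitin_at)
  have "A' \<in> Lspace scF PF scG PG" "B0 \<in> Lspace scE PE scF PF" "B' \<in> Lspace scE PE scF PF"
    using A' B B' unfolding limitin_Ltop[OF F G] limitin_Ltop[OF E F] by blast+
  then show "(A' \<circ> B0) + (A0 \<circ> B') \<in> topspace (Ltop b scE PE scG PG)"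
    using A0 by (simp add: Lspace_add[OF E G] Lspace_comp)
  fix \<tau> :: "nat \<Rightarrow> 'k" assume "\<forall>n. \<tau> n \<noteq> 0" "\<tau> \<longlonglongrightarrow> 0"
  then have \<tau>: "filterlim \<tau> (at 0) sequentially"
    by (simp add: filterlim_at)
  have A0_const: "limitin (Ltop b scF PF scG PG) (\<lambda>n. A0) A0 sequentially"
    using A0 by simp
  have "limitin (Ltop b scE PE scG PG)
      (\<lambda>n. (Lscale scG (inverse (\<tau> n)) (A (\<tau> n) - A0) \<circ> B (\<tau> n)) + (A0 \<circ> Lscale scF (inverse (\<tau> n)) (B (\<tau> n) - B0)))
      ((A' \<circ> B0) + (A0 \<circ> B')) sequentially"
    using limitin_compose_filterlim[OF A' \<tau>] limitin_compose_filterlim[OF B \<tau>]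
      limitin_compose_filterlim[OF B' \<tau>] A0_const
    by (intro limitin_Ltop_add[OF E G] limitin_Ltop_comp_sequentially)
  then show "limitin (Ltop b scE PE scG PG)
      (\<lambda>n. Lscale scG (inverse (\<tau> n)) ((A (\<tau> n) \<circ> B (\<tau> n)) - (A0 \<circ> B0))) ((A' \<circ> B0) + (A0 \<circ> B')) sequentially"
    unfolding Lscale_comp_diff[OF A0] .
qed

end

section \<open>Keller \<open>C\<^sup>k\<close> maps\<close>

lemma Ck_Suc_imp_Ck: "Ck scX PX scY TY (Suc k) m W phi \<Longrightarrow> Ck scX PX scY TY k m W phi"
proof (induction k arbitrary: m W phi)
  case (Suc k)
  then obtain psi where "continuous_map (subtopology (Xpow PX m) W) TY phi"
    "is_dirderiv scX PX scY TY m W phi psi" "Ck scX PX scY TY (Suc k) (2*m) (dom2 PX m W) psi"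
    by auto
  with Suc.IH[of "2*m" "dom2 PX m W" psi] show ?case
    by (simp only: Ck.simps) blast
qed simp

definition coord_select :: "(nat \<Rightarrow> nat) \<Rightarrow> nat \<Rightarrow> (nat \<Rightarrow> 'x) \<Rightarrow> (nat \<Rightarrow> 'x)" where
  "coord_select s m w = restrict (\<lambda>i. w (s i)) {..<m}"

lemma coord_select_id: "coord_select (\<lambda>i. i) m = (\<lambda>w. restrict w {..<m})"
  by (simp add: fun_eq_iff coord_select_def)

lemma coord_select_topspace: "coord_select s m w \<in> topspace (Xpow PX m)"
  unfolding coord_select_def Xpow_def by auto

lemma continuous_map_coord_select:
  assumes "\<And>i. i < m \<Longrightarrow> s i < n"
  shows "continuous_map (Xpow PX n) (Xpow PX m) (coord_select s m)"
  unfolding Xpow_def continuous_map_componentwise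
proof (intro conjI ballI)
  fix i assume "i \<in> {..<m}"
  with assms show "continuous_map (product_topology (\<lambda>_. lcs_top PX) {..<n}) (lcs_top PX) (\<lambda>w. coord_select s m w i)"
    unfolding coord_select_def by (auto intro: continuous_map_product_projection)
qed (auto simp: coord_select_def)

lemma Ck_comp_coord_select:
  assumes "\<And>i. i < m \<Longrightarrow> s i < n" and "\<And>w. w \<in> W \<Longrightarrow> coord_select s m w \<in> W'"
    and "Ck scX PX scY TY k m W' phi"
  shows "Ck scX PX scY TY k n W (phi \<circ> coord_select s m)"
  using assms
proof (induction k arbitrary: n m s W W' phi)
  case 0
  have "continuous_map (subtopology (Xpow PX n) W) (subtopology (Xpow PX m) W') (coord_select s m)"
    using continuous_map_from_subtopology[OF continuous_map_coord_select[OF 0(1)]] 0(2)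
    unfolding continuous_map_in_subtopology by auto
  from continuous_map_compose[OF this 0(3)[unfolded Ck.simps]] show ?case
    by (simp only: Ck.simps)
next
  case (Suc k)
  from Suc.prems(3) obtain psi where cont: "continuous_map (subtopology (Xpow PX m) W') TY phi"
    and dd: "is_dirderiv scX PX scY TY m W' phi psi" and ck: "Ck scX PX scY TY k (2*m) (dom2 PX m W') psi"
    by auto
  have sel: "continuous_map (subtopology (Xpow PX n) W) (subtopology (Xpow PX m) W') (coord_select s m)"
    using continuous_map_from_subtopology[OF continuous_map_coord_select[OF Suc.prems(1)]] Suc.prems(2)
    unfolding continuous_map_in_subtopology by auto
  \<comment> \<open>points of \<open>dom2 PX n W\<close> carry the base point in \<open>{..<n}\<close> and the direction in \<open>{n..<2*n}\<close>\<close>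
  define s2 where "s2 i = (if i < m then s i else n + s (i - m))" for i
  have s2: "s2 i < 2 * n" if "i < 2 * m" for i
    using Suc.prems(1)[of i] Suc.prems(1)[of "i - m"] that unfolding s2_def by auto
  have shift: "coord_select s m (shiftpt scX n w t) = shiftpt scX m (coord_select s2 (2*m) w) t" for w t
    unfolding coord_select_def shiftpt_def s2_def using Suc.prems(1) by (auto simp: fun_eq_iff)
  have base: "coord_select s m (restrict w {..<n}) = restrict (coord_select s2 (2*m) w) {..<m}" for w
    unfolding coord_select_def s2_def using Suc.prems(1) by (auto simp: fun_eq_iff)
  have dom2: "coord_select s2 (2*m) w \<in> dom2 PX m W'" if "w \<in> dom2 PX n W" for w
  proof -
    have "restrict w {..<n} \<in> W"
      using that unfolding dom2_def by blast
    from Suc.prems(2)[OF this] show ?thesis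
      unfolding dom2_def base using coord_select_topspace by blast
  qed
  have "is_dirderiv scX PX scY TY n W (phi \<circ> coord_select s m) (psi \<circ> coord_select s2 (2*m))"
    using dd dom2 unfolding is_dirderiv_def o_def shift base by blast
  moreover have "Ck scX PX scY TY k (2*n) (dom2 PX n W) (psi \<circ> coord_select s2 (2*m))"
    using Suc.IH[OF s2 dom2 ck] .
  ultimately show ?case
    using continuous_map_compose[OF sel cont] by (simp only: Ck.simps) blast
qed

lemma Ck_restrict_dom2:
  "Ck scX PX scY TY k m W phi \<Longrightarrow> Ck scX PX scY TY k (2*m) (dom2 PX m W) (\<lambda>w. phi (restrict w {..<m}))"
  using Ck_comp_coord_select[of m "\<lambda>i. i" "2*m" "dom2 PX m W" W]
  by (simp add: coord_select_id dom2_def o_def)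

lemma openin_dom2:
  assumes "openin (Xpow PX m) W"
  shows "openin (Xpow PX (2*m)) (dom2 PX m W)"
proof -
  have "continuous_map (Xpow PX (2*m)) (Xpow PX m) (\<lambda>w. restrict w {..<m})"
    using continuous_map_coord_select[of m "\<lambda>i. i" "2*m" PX] by (simp add: coord_select_id)
  from openin_continuous_map_preimage[OF this assms] show ?thesis
    unfolding dom2_def .
qed

lemma k_space_Xpow_open:
  assumes "kinf_space (lcs_top PX)" and "openin (Xpow PX m) W"
  shows "k_space (subtopology (Xpow PX m) W)"
proof -
  have "Hausdorff_space (Xpow PX m)" "k_space (Xpow PX m)"
    using assms(1) unfolding kinf_space_def Xpow_def Hausdorff_space_product_topology by auto
  then show ?thesis
    using k_space_open_subtopology assms(2) by blast
qed

lemma limitin_shiftpt: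
  assumes X: "lcs scX PX"
  shows "limitin (Xpow PX m) (shiftpt scX m w) (restrict w {..<m}) (at 0)"
  unfolding Xpow_def limitin_componentwise
proof (intro conjI ballI)
  fix i assume "i \<in> {..<m}"
  then show "limitin (lcs_top PX) (\<lambda>t. shiftpt scX m w t i) (restrict w {..<m} i) (at 0)"
    unfolding limitin_seminorm_topology[OF group_seminorms_on_lcs[OF X]] shiftpt_def
    by (auto simp: lcs_seminorm_scale[OF X] intro!: tendsto_mult_left_zero tendsto_norm_zero tendsto_ident_at)
qed (auto simp: shiftpt_def)

lemma Lscale_add: "module sc \<Longrightarrow> Lscale sc c (S + T) = Lscale sc c S + Lscale sc c T"
  by (simp add: Lscale_def fun_eq_iff module.scale_right_distrib)

lemma Ck_add:
  fixes scY :: "'k::real_normed_field \<Rightarrow> 'y::ab_group_add \<Rightarrow> 'y"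
  assumes VP: "group_seminorms_on V P" and additive: "\<And>c y z. scY c (y + z) = scY c y + scY c z"
  shows "Ck scX PX scY (seminorm_topology V P) k m W phi \<Longrightarrow> Ck scX PX scY (seminorm_topology V P) k m W psi
    \<Longrightarrow> Ck scX PX scY (seminorm_topology V P) k m W (\<lambda>w. phi w + psi w)"
proof (induction k arbitrary: m W phi psi)
  case 0
  then show ?case
    by (simp add: continuous_map_seminorm_topology_add[OF VP])
next
  case (Suc k)
  from Suc.prems(1) obtain phi' where cphi: "continuous_map (subtopology (Xpow PX m) W) (seminorm_topology V P) phi"
    and dphi: "is_dirderiv scX PX scY (seminorm_topology V P) m W phi phi'"
    and kphi: "Ck scX PX scY (seminorm_topology V P) k (2*m) (dom2 PX m W) phi'"
    by auto
  from Suc.prems(2) obtain psi' where cpsi: "continuous_map (subtopology (Xpow PX m) W) (seminorm_topology V P) psi"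
    and dpsi: "is_dirderiv scX PX scY (seminorm_topology V P) m W psi psi'"
    and kpsi: "Ck scX PX scY (seminorm_topology V P) k (2*m) (dom2 PX m W) psi'"
    by auto
  have quot: "scY c ((a + b) - (a0 + b0)) = scY c (a - a0) + scY c (b - b0)" for c a b a0 b0
    by (simp add: add_diff_add additive)
  have "is_dirderiv scX PX scY (seminorm_topology V P) m W (\<lambda>w. phi w + psi w) (\<lambda>w. phi' w + psi' w)"
    using dphi dpsi limitin_seminorm_topology_add[OF VP] unfolding is_dirderiv_def quot by blast
  with Suc.IH[OF kphi kpsi] continuous_map_seminorm_topology_add[OF VP cphi cpsi] show ?case
    by auto
qed

context
  fixes scX :: "'k::real_normed_field \<Rightarrow> 'x::ab_group_add \<Rightarrow> 'x" and PX :: "('x \<Rightarrow> real) set"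
    and scE :: "'k \<Rightarrow> 'e::ab_group_add \<Rightarrow> 'e" and PE :: "('e \<Rightarrow> real) set"
    and scF :: "'k \<Rightarrow> 'f::ab_group_add \<Rightarrow> 'f" and PF :: "('f \<Rightarrow> real) set"
    and scG :: "'k \<Rightarrow> 'g::ab_group_add \<Rightarrow> 'g" and PG :: "('g \<Rightarrow> real) set"
  assumes X: "lcs scX PX" and E: "lcs scE PE" and F: "lcs scF PF" and G: "lcs scG PG"
begin

lemma is_dirderiv_comp:
  assumes W: "openin (Xpow PX m) W"
    and cA: "continuous_map (subtopology (Xpow PX m) W) (Ltop b scF PF scG PG) A"
    and cB: "continuous_map (subtopology (Xpow PX m) W) (Ltop b scE PE scF PF) B"
    and dA: "is_dirderiv scX PX (Lscale scG) (Ltop b scF PF scG PG) m W A A'"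
    and dB: "is_dirderiv scX PX (Lscale scF) (Ltop b scE PE scF PF) m W B B'"
  shows "is_dirderiv scX PX (Lscale scG) (Ltop b scE PE scG PG) m W (\<lambda>w. A w \<circ> B w)
           (\<lambda>w. (A' w \<circ> B (restrict w {..<m})) + (A (restrict w {..<m}) \<circ> B' w))"
  unfolding is_dirderiv_def
proof
  fix w assume w: "w \<in> dom2 PX m W"
  define x where "x = restrict w {..<m}"
  define s where "s = shiftpt scX m w"
  have "x \<in> W"
    using w unfolding dom2_def x_def by auto
  have s: "limitin (Xpow PX m) s x (at 0)"
    unfolding s_def x_def by (rule limitin_shiftpt[OF X])
  then have "eventually (\<lambda>t. s t \<in> W) (at 0)"
    using W \<open>x \<in> W\<close> unfolding limitin_def by blast
  with s \<open>x \<in> W\<close> have sW: "limitin (subtopology (Xpow PX m) W) s x (at 0)"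
    unfolding limitin_subtopology by blast
  have "limitin (Ltop b scF PF scG PG) (\<lambda>t. A (s t)) (A x) (at 0)"
    using continuous_map_limit[OF cA sW] unfolding o_def .
  then have Ax: "A x \<in> Lspace scF PF scG PG"
    using limitin_topspace by fastforce
  have Bs: "limitin (Ltop b scE PE scF PF) (\<lambda>t. B (s t)) (B x) (at 0)"
    using continuous_map_limit[OF cB sW] unfolding o_def .
  have "limitin (Ltop b scF PF scG PG) (\<lambda>t. Lscale scG (inverse t) (A (s t) - A x)) (A' w) (at 0)"
    and "limitin (Ltop b scE PE scF PF) (\<lambda>t. Lscale scF (inverse t) (B (s t) - B x)) (B' w) (at 0)"
    using dA dB w unfolding is_dirderiv_def s_def x_def by blast+
  from limitin_Ltop_comp_diff_quotient[OF E F G this(1) Bs this(2) Ax]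
  show "limitin (Ltop b scE PE scG PG)
     (\<lambda>t. Lscale scG (inverse t) ((A (shiftpt scX m w t) \<circ> B (shiftpt scX m w t))
        - (A (restrict w {..<m}) \<circ> B (restrict w {..<m}))))
     ((A' w \<circ> B (restrict w {..<m})) + (A (restrict w {..<m}) \<circ> B' w)) (at 0)"
    unfolding s_def x_def .
qed

lemma Ck_comp:
  assumes kinf: "kinf_space (lcs_top PX)"
  shows "openin (Xpow PX m) W \<Longrightarrow> Ck scX PX (Lscale scG) (Ltop b scF PF scG PG) k m W A
    \<Longrightarrow> Ck scX PX (Lscale scF) (Ltop b scE PE scF PF) k m W B
    \<Longrightarrow> Ck scX PX (Lscale scG) (Ltop b scE PE scG PG) k m W (\<lambda>w. A w \<circ> B w)"
proof (induction k arbitrary: m W A B)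
  case 0
  then show ?case
    by (simp only: Ck.simps) (blast intro: continuous_map_Ltop_comp[OF E F G k_space_Xpow_open[OF kinf]])
next
  case (Suc k)
  from Suc.prems(2) obtain A' where cA: "continuous_map (subtopology (Xpow PX m) W) (Ltop b scF PF scG PG) A"
    and dA: "is_dirderiv scX PX (Lscale scG) (Ltop b scF PF scG PG) m W A A'"
    and kA: "Ck scX PX (Lscale scG) (Ltop b scF PF scG PG) k (2*m) (dom2 PX m W) A'"
    by auto
  from Suc.prems(3) obtain B' where cB: "continuous_map (subtopology (Xpow PX m) W) (Ltop b scE PE scF PF) B"
    and dB: "is_dirderiv scX PX (Lscale scF) (Ltop b scE PE scF PF) m W B B'"
    and kB: "Ck scX PX (Lscale scF) (Ltop b scE PE scF PF) k (2*m) (dom2 PX m W) B'"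
    by auto
  have W2: "openin (Xpow PX (2*m)) (dom2 PX m W)"
    using openin_dom2[OF Suc.prems(1)] .
  have "Ck scX PX (Lscale scG) (Ltop b scE PE scG PG) k (2*m) (dom2 PX m W)
     (\<lambda>w. (A' w \<circ> B (restrict w {..<m})) + (A (restrict w {..<m}) \<circ> B' w))"
    using Ck_add[where scY = "Lscale scG", OF group_seminorms_on_Lspace[OF E G] Lscale_add[OF lcs_module[OF G]],
        folded Ltop_def]
      Suc.IH[OF W2 kA Ck_restrict_dom2[OF Ck_Suc_imp_Ck[OF Suc.prems(3)]]]
      Suc.IH[OF W2 Ck_restrict_dom2[OF Ck_Suc_imp_Ck[OF Suc.prems(2)]] kB]
    by blast
  moreover have "is_dirderiv scX PX (Lscale scG) (Ltop b scE PE scG PG) m W (\<lambda>w. A w \<circ> B w)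
           (\<lambda>w. (A' w \<circ> B (restrict w {..<m})) + (A (restrict w {..<m}) \<circ> B' w))"
    by (rule is_dirderiv_comp[OF Suc.prems(1) cA cB dA dB])
  moreover have "continuous_map (subtopology (Xpow PX m) W) (Ltop b scE PE scG PG) (\<lambda>w. A w \<circ> B w)"
    by (rule continuous_map_Ltop_comp[OF E F G k_space_Xpow_open[OF kinf Suc.prems(1)] cA cB])
  ultimately show ?case
    by (simp only: Ck.simps) blast
qed

end

theorem proposition3p1:
  fixes scX :: "'k::real_normed_field \<Rightarrow> 'x::ab_group_add \<Rightarrow> 'x" and PX :: "('x \<Rightarrow> real) set"
    and scE :: "'k \<Rightarrow> 'e::ab_group_add \<Rightarrow> 'e" and PE :: "('e \<Rightarrow> real) set"
    and scF :: "'k \<Rightarrow> 'f::ab_group_add \<Rightarrow> 'f" and PF :: "('f \<Rightarrow> real) set"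
    and scG :: "'k \<Rightarrow> 'g::ab_group_add \<Rightarrow> 'g" and PG :: "('g \<Rightarrow> real) set"
    and U :: "'x set" and n :: enat and b :: bool
    and f :: "'x \<Rightarrow> 'e \<Rightarrow> 'f" and g :: "'x \<Rightarrow> 'f \<Rightarrow> 'g"
  assumes "lcs scX PX" and "lcs scE PE" and "lcs scF PF" and "lcs scG PG"
    and "kinf_space (lcs_top PX)"
    and "openin (lcs_top PX) U"
    and "Cn_map scX PX (Lscale scF) (Ltop b scE PE scF PF) n U f"
    and "Cn_map scX PX (Lscale scG) (Ltop b scF PF scG PG) n U g"
  shows "Cn_map scX PX (Lscale scG) (Ltop b scE PE scG PG) n U (\<lambda>z. g z \<circ> f z)"
proof -
  define W where "W = {w \<in> topspace (Xpow PX 1). w 0 \<in> U}"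
  have "continuous_map (Xpow PX 1) (lcs_top PX) (\<lambda>w. w 0)"
    unfolding Xpow_def by (rule continuous_map_product_projection) simp
  then have "openin (Xpow PX 1) W"
    unfolding W_def using openin_continuous_map_preimage assms(6) by blast
  then have "Ck scX PX (Lscale scG) (Ltop b scE PE scG PG) k 1 W (\<lambda>w. g (w 0) \<circ> f (w 0))"
    if "Ck scX PX (Lscale scG) (Ltop b scF PF scG PG) k 1 W (\<lambda>w. g (w 0))"
       "Ck scX PX (Lscale scF) (Ltop b scE PE scF PF) k 1 W (\<lambda>w. f (w 0))" for k
    using Ck_comp[OF assms(1-5)] that by blast
  with assms(7,8) show ?thesis
    unfolding Cn_map_def Let_def W_def[symmetric] by (cases n) auto
qed

end
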